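(* Let $\mathbf x=(k,S,\Lambda,\mathbf a)$ be an abelian group $k$-parameter and $G=G_{\mathbf x}$. If $U\subseteq{}^\omega S$ and $u\subseteq{}^\omega S\setminus U$ is finite, then $G_{U,u}\subseteq G_{U\cup u}$, and moreover $G_{U,u}$ is a pure subgroup of $G_{U\cup u}$ and $G_{U\cup u}$ is a pure subgroup of $G$.
   Context: For a set $S$, ${}^\omega S$ is the set of all functions $\omega\to S$. An abelian group $k$-parameter is $\mathbf x=(k,S,\Lambda,\mathbf a)$ with $k<\omega$, $S$ a set, $\Lambda\subseteq {}^{k+1}({}^\omega S)$ (sequences $\bar\eta=\langle\eta_0,\dots,\eta_k\rangle$, $\eta_\ell\in{}^\omega S$) and $\mathbf a:\Lambda\times\omega\to\mathbb Z$, $\mathbf a_{\bar\eta,n}=\mathbf a(\bar\eta,n)$. For $\bar\eta\in\Lambda$, $m\le k$, $n<\omega$, $\bar\eta\upharpoonleft\langle m,n\rangle$ is the sequence obtained from $\bar\eta$ by replacing $\eta_m$ with $\eta_m\restriction n$. $\Lambda_m=\{\bar\eta\upharpoonleft\langle m,n\rangle:\bar\eta\in\Lambda,n<\omega\}$, $\Lambda_{\le k}=\bigcup_{m\le k}\Lambda_m$. $G_{\mathbf x}$ is the abelian group generated by $z$, $x_{\bar\nu}$ ($\bar\nu\in\Lambda_{\le k}$), $y_{\bar\eta,n}$ ($\bar\eta\in\Lambda,n<\omega$) freely except for the relations $(n!)y_{\bar\eta,n+1}=y_{\bar\eta,n}+\mathbf a_{\bar\eta,n}z+\sum_{m\le k}x_{\bar\eta\upharpoonleft\langle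 m,n\rangle}$ ($\bar\eta\in\Lambda$, $n<\omega$). For $U\subseteq{}^\omega S$, $G_U$ is the subgroup of $G_{\mathbf x}$ generated by $\{z\}\cup\{y_{\bar\eta,n}:\bar\eta\in\Lambda\cap{}^{k+1}U,n<\omega\}\cup\{x_{\bar\eta\upharpoonleft\langle m,n\rangle}:\bar\eta\in\Lambda\cap{}^{k+1}U,m\le k,n<\omega\}$. For $U\subseteq{}^\omega S$ and finite $u\subseteq{}^\omega S$, $G_{U,u}$ is the subgroup of $G_{\mathbf x}$ generated by $\bigcup_{\eta\in u}G_{U\cup(u\setminus\{\eta\})}$ (so $G_{U,\emptyset}=\{0\}$). A subgroup $H\subseteq K$ is pure if $na\in H$, $a\in K$, $0\neq n\in\mathbb Z$ imply $a\in H$. *)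

theory Defs
  imports "HOL-Algebra.Free_Abelian_Groups" "HOL-Algebra.Coset"
begin

text \<open>A component of an index sequence: either a full omega-sequence or a finite
  initial segment (eta restricted to n), represented as a list of length n.\<close>
datatype 's part = Full "nat \<Rightarrow> 's" | Fin "'s list"

datatype 's gen = GZ | GX "'s part list" | GY "(nat \<Rightarrow> 's) list" nat

definition omega_seqs :: "'s set \<Rightarrow> (nat \<Rightarrow> 's) set" where
  "omega_seqs S = {\<eta>. \<forall>i. \<eta> i \<in> S}"

definition is_param :: "nat \<Rightarrow> 's set \<Rightarrow> (nat \<Rightarrow> 's) list set \<Rightarrow> ((nat \<Rightarrow> 's) list \<Rightarrow> nat \<Rightarrow> int) \<Rightarrow> bool" where
  "is_param k S \<Lambda> a \<longleftrightarrow> (\<forall>\<eta>s\<in>\<Lambda>. length \<eta>s = Suc k \<and> (\<forall>\<eta>\<in>set \<eta>s. \<eta> \<in> omega_seqs S))"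

definition trunc :: "(nat \<Rightarrow> 's) list \<Rightarrow> nat \<Rightarrow> nat \<Rightarrow> 's part list" where
  "trunc \<eta>s m n = (map Full \<eta>s)[m := Fin (map (\<eta>s ! m) [0..<n])]"

definition Lam_le :: "nat \<Rightarrow> (nat \<Rightarrow> 's) list set \<Rightarrow> 's part list set" where
  "Lam_le k \<Lambda> = {trunc \<eta>s m n | \<eta>s m n. \<eta>s \<in> \<Lambda> \<and> m \<le> k}"

definition gens :: "nat \<Rightarrow> (nat \<Rightarrow> 's) list set \<Rightarrow> 's gen set" where
  "gens k \<Lambda> = {GZ} \<union> GX ` Lam_le k \<Lambda> \<union> {GY \<eta>s n | \<eta>s n. \<eta>s \<in> \<Lambda>}"

definition FA :: "nat \<Rightarrow> (nat \<Rightarrow> 's) list set \<Rightarrow> ('s gen \<Rightarrow>\<^sub>0 int) monoid" where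
  "FA k \<Lambda> = free_Abelian_group (gens k \<Lambda>)"

definition relator :: "nat \<Rightarrow> ((nat \<Rightarrow> 's) list \<Rightarrow> nat \<Rightarrow> int) \<Rightarrow> (nat \<Rightarrow> 's) list \<Rightarrow> nat \<Rightarrow> ('s gen \<Rightarrow>\<^sub>0 int)" where
  "relator k a \<eta>s n =
     frag_cmul (int (fact n)) (frag_of (GY \<eta>s (Suc n))) - frag_of (GY \<eta>s n)
     - frag_cmul (a \<eta>s n) (frag_of GZ) - (\<Sum>m\<le>k. frag_of (GX (trunc \<eta>s m n)))"

definition rels :: "nat \<Rightarrow> (nat \<Rightarrow> 's) list set \<Rightarrow> ((nat \<Rightarrow> 's) list \<Rightarrow> nat \<Rightarrow> int) \<Rightarrow> ('s gen \<Rightarrow>\<^sub>0 int) set" where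
  "rels k \<Lambda> a = {relator k a \<eta>s n | \<eta>s n. \<eta>s \<in> \<Lambda>}"

definition relsub :: "nat \<Rightarrow> (nat \<Rightarrow> 's) list set \<Rightarrow> ((nat \<Rightarrow> 's) list \<Rightarrow> nat \<Rightarrow> int) \<Rightarrow> ('s gen \<Rightarrow>\<^sub>0 int) set" where
  "relsub k \<Lambda> a = generate (FA k \<Lambda>) (rels k \<Lambda> a)"

definition Gx :: "nat \<Rightarrow> (nat \<Rightarrow> 's) list set \<Rightarrow> ((nat \<Rightarrow> 's) list \<Rightarrow> nat \<Rightarrow> int) \<Rightarrow> ('s gen \<Rightarrow>\<^sub>0 int) set monoid" where
  "Gx k \<Lambda> a = FA k \<Lambda> Mod relsub k \<Lambda> a"

definition cls :: "nat \<Rightarrow> (nat \<Rightarrow> 's) list set \<Rightarrow> ((nat \<Rightarrow> 's) list \<Rightarrow> nat \<Rightarrow> int) \<Rightarrow> 's gen \<Rightarrow> ('s gen \<Rightarrow>\<^sub>0 int) set" where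
  "cls k \<Lambda> a g = relsub k \<Lambda> a #>\<^bsub>FA k \<Lambda>\<^esub> frag_of g"

definition GU :: "nat \<Rightarrow> (nat \<Rightarrow> 's) list set \<Rightarrow> ((nat \<Rightarrow> 's) list \<Rightarrow> nat \<Rightarrow> int) \<Rightarrow> (nat \<Rightarrow> 's) set \<Rightarrow> ('s gen \<Rightarrow>\<^sub>0 int) set set" where
  "GU k \<Lambda> a U = generate (Gx k \<Lambda> a) (cls k \<Lambda> a `
     ({GZ} \<union> {GY \<eta>s n | \<eta>s n. \<eta>s \<in> \<Lambda> \<and> set \<eta>s \<subseteq> U}
           \<union> {GX (trunc \<eta>s m n) | \<eta>s m n. \<eta>s \<in> \<Lambda> \<and> set \<eta>s \<subseteq> U \<and> m \<le> k}))"

definition GUu :: "nat \<Rightarrow> (nat \<Rightarrow> 's) list set \<Rightarrow> ((nat \<Rightarrow> 's) list \<Rightarrow> nat \<Rightarrow> int) \<Rightarrow> (nat \<Rightarrow> 's) set \<Rightarrow> (nat \<Rightarrow> 's) set \<Rightarrow> ('s gen \<Rightarrow>\<^sub>0 int) set set" where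
  "GUu k \<Lambda> a U u = generate (Gx k \<Lambda> a) (\<Union>\<eta>\<in>u. GU k \<Lambda> a (U \<union> (u - {\<eta>})))"

definition pure_subgroup :: "'a set \<Rightarrow> 'a set \<Rightarrow> ('a, 'b) monoid_scheme \<Rightarrow> bool" where
  "pure_subgroup H K G \<longleftrightarrow> subgroup H G \<and> subgroup K G \<and> H \<subseteq> K \<and>
     (\<forall>x\<in>K. \<forall>n::int. n \<noteq> 0 \<longrightarrow> x [^]\<^bsub>G\<^esub> n \<in> H \<longrightarrow> x \<in> H)"

end

(*
  Call a set T of generators saturated if together with some y_(eta,n) it contains z, every
  y_(eta,n') and every x_(eta|<m,n>); the generators of G_U form such a set, and G_(U,u) is generated
  by a union of such sets. The preimage of <T> in the free Abelian group F on the generators is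
  M = R + <T>, R the subgroup of relators. Map F into the Q-vector space on the generators: elements
  of T go to 0, the remaining x's and z to basis vectors, and y_(eta,n) to the solution of the
  relations in Q starting from the basis vector y_(eta,0). This map kills M. Conversely, pushing all
  y's up to one level N with the relations, every element of F is congruent modulo M to a
  combination h of generators outside T whose y's all have level N, and the map is injective on such
  h: the coordinate at y_(eta,0) detects y_(eta,N) with the factor 1/(0! 1! ... (N-1)!). So M is the
  kernel of a map into a torsion-free group, hence pure in F, and <T> is pure in G_x = F/R.
*)

theory Submission
  imports Defs
begin

section \<open>Generated and pure subgroups\<close>

lemma pure_subgroup_intermediate:
  assumes "pure_subgroup H (carrier G) G" "subgroup K G" "H \<subseteq> K"
  shows "pure_subgroup H K G"
  using assms subgroup.subset unfolding pure_subgroup_def by blast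

lemma (in group) generate_UN_generate:
  assumes "\<And>i. i \<in> I \<Longrightarrow> A i \<subseteq> carrier G"
  shows "generate G (\<Union>i\<in>I. generate G (A i)) = generate G (\<Union>i\<in>I. A i)"
proof
  have "(\<Union>i\<in>I. generate G (A i)) \<subseteq> generate G (\<Union>i\<in>I. A i)"
    by (intro UN_least mono_generate) auto
  then show "generate G (\<Union>i\<in>I. generate G (A i)) \<subseteq> generate G (\<Union>i\<in>I. A i)"
    by (intro generate_subgroup_incl generate_is_subgroup) (use assms in auto)
  show "generate G (\<Union>i\<in>I. A i) \<subseteq> generate G (\<Union>i\<in>I. generate G (A i))"
    by (intro mono_generate UN_mono) (auto intro: generate.incl)
qed

lemma (in group_hom) subgroup_vimage:
  assumes "subgroup K H"
  shows "subgroup {x \<in> carrier G. h x \<in> K} G"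
  using assms by (auto intro!: subgroup.intro simp: subgroup.m_closed subgroup.one_closed subgroup.m_inv_closed)

lemma (in group_hom) vimage_generate_image:
  assumes "X \<subseteq> carrier G"
  shows "{x \<in> carrier G. h x \<in> generate H (h ` X)} = generate G (kernel G H h \<union> X)"
proof
  have "kernel G H h \<union> X \<subseteq> {x \<in> carrier G. h x \<in> generate H (h ` X)}"
    using assms by (auto simp: kernel_def intro: generate.one generate.incl)
  then show "generate G (kernel G H h \<union> X) \<subseteq> {x \<in> carrier G. h x \<in> generate H (h ` X)}"
    using assms by (intro G.generate_subgroup_incl subgroup_vimage H.generate_is_subgroup) auto
next
  show "{x \<in> carrier G. h x \<in> generate H (h ` X)} \<subseteq> generate G (kernel G H h \<union> X)"
  proof safe
    fix x assume x: "x \<in> carrier G" "h x \<in> generate H (h ` X)"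
    then obtain t where t: "t \<in> generate G X" "h x = h t"
      using generate_img[OF assms] by auto
    have t_carrier: "t \<in> carrier G"
      using t(1) G.generate_in_carrier assms by blast
    have "x \<otimes> inv t \<in> kernel G H h"
      using x t_carrier t(2) by (simp add: kernel_def)
    moreover have "t \<in> generate G (kernel G H h \<union> X)"
      using t(1) G.mono_generate by blast
    ultimately have "(x \<otimes> inv t) \<otimes> t \<in> generate G (kernel G H h \<union> X)"
      by (blast intro: generate.eng generate.incl)
    then show "x \<in> generate G (kernel G H h \<union> X)"
      using x t_carrier by (simp add: G.m_assoc)
  qed
qed

lemma (in group_hom) pure_subgroup_of_pure_vimage:
  assumes surj: "h ` carrier G = carrier H" and K: "subgroup K H"
    and pure: "pure_subgroup {x \<in> carrier G. h x \<in> K} (carrier G) G"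
  shows "pure_subgroup K (carrier H) H"
  unfolding pure_subgroup_def
proof (intro conjI ballI allI impI K H.subgroup_self subgroup.subset)
  fix y and n :: int
  assume y: "y \<in> carrier H" and n: "n \<noteq> 0" and pow: "y [^]\<^bsub>H\<^esub> n \<in> K"
  obtain x where x: "x \<in> carrier G" "y = h x"
    using y surj by auto
  then have "x [^]\<^bsub>G\<^esub> n \<in> {x \<in> carrier G. h x \<in> K}"
    using pow by (simp add: hom_int_pow)
  then have "x \<in> {x \<in> carrier G. h x \<in> K}"
    using pure x n unfolding pure_subgroup_def by blast
  then show "y \<in> K"
    using x by simp
qed

section \<open>Additive functionals on free Abelian groups\<close>

lemma subgroup_free_Abelian_group_diff:
  assumes "subgroup K (free_Abelian_group A)" "x \<in> K" "y \<in> K"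
  shows "x - y \<in> K"
proof -
  have "- y \<in> K"
    using subgroup.m_inv_closed[OF assms(1,3)] subgroup.mem_carrier[OF assms(1,3)] by simp
  then show ?thesis
    using subgroup.m_closed[OF assms(1,2)] by (metis diff_conv_add_uminus mult_free_Abelian_group)
qed

lemma subgroup_free_Abelian_group_cmul:
  assumes "subgroup K (free_Abelian_group A)" "x \<in> K"
  shows "frag_cmul c x \<in> K"
  using group.subgroup_int_pow_closed[OF group_free_Abelian_group assms, of c]
    subgroup.mem_carrier[OF assms] by simp

definition frag_eval :: "('a \<Rightarrow> 'b::comm_ring_1) \<Rightarrow> ('a \<Rightarrow>\<^sub>0 int) \<Rightarrow> 'b" where
  "frag_eval v f = (\<Sum>g\<in>Poly_Mapping.keys f. of_int (poly_mapping.lookup f g) * v g)"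

lemma frag_eval_superset:
  assumes "finite A" "Poly_Mapping.keys f \<subseteq> A"
  shows "frag_eval v f = (\<Sum>g\<in>A. of_int (poly_mapping.lookup f g) * v g)"
  unfolding frag_eval_def
  by (rule sum.mono_neutral_left) (use assms in \<open>auto simp: in_keys_iff\<close>)

lemma frag_eval_0 [simp]: "frag_eval v 0 = 0"
  by (simp add: frag_eval_def)

lemma frag_eval_frag_of [simp]: "frag_eval v (frag_of g) = v g"
  by (simp add: frag_eval_def keys_frag_of)

lemma frag_eval_add: "frag_eval v (f + h) = frag_eval v f + frag_eval v h"
proof -
  let ?A = "Poly_Mapping.keys f \<union> Poly_Mapping.keys h"
  have "frag_eval v (f + h) = (\<Sum>g\<in>?A. of_int (poly_mapping.lookup (f + h) g) * v g)"
    by (rule frag_eval_superset) (auto simp: keys_add)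
  also have "\<dots> = frag_eval v f + frag_eval v h"
    by (simp add: frag_eval_superset[where A = ?A] lookup_add distrib_right sum.distrib)
  finally show ?thesis .
qed

lemma frag_eval_cmul: "frag_eval v (frag_cmul c f) = of_int c * frag_eval v f"
  by (subst frag_eval_superset[OF finite_keys keys_cmul])
    (simp add: frag_eval_def sum_distrib_left mult.assoc)

lemma frag_eval_minus: "frag_eval v (- f) = - frag_eval v f"
  using frag_eval_cmul[of v "-1" f] by simp

lemma frag_eval_diff: "frag_eval v (f - h) = frag_eval v f - frag_eval v h"
  using frag_eval_add[of v f "- h"] by (simp add: frag_eval_minus)

lemma frag_eval_sum: "frag_eval v (\<Sum>i\<in>I. f i) = (\<Sum>i\<in>I. frag_eval v (f i))"
  by (induction I rule: infinite_finite_induct) (auto simp: frag_eval_add)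

lemma frag_eval_generate_eq_0:
  assumes X: "X \<subseteq> carrier (free_Abelian_group A)" and vanish: "\<And>x. x \<in> X \<Longrightarrow> frag_eval v x = 0"
    and y: "y \<in> generate (free_Abelian_group A) X"
  shows "frag_eval v y = 0"
  using y
proof induction
  case (inv x)
  then show ?case
    using X vanish by (auto simp: frag_eval_minus)
qed (auto simp: vanish frag_eval_add)

section \<open>The presentation of G_x\<close>

lemma GX_trunc_in_gens: "\<eta>s \<in> \<Lambda> \<Longrightarrow> m \<le> k \<Longrightarrow> GX (trunc \<eta>s m n) \<in> gens k \<Lambda>"
  by (auto simp: gens_def Lam_le_def)

lemma relator_in_carrier:
  assumes "\<eta>s \<in> \<Lambda>"
  shows "relator k a \<eta>s n \<in> carrier (FA k \<Lambda>)"
proof -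
  note carrier_subgroup = group.subgroup_self[OF group_free_Abelian_group]
  show ?thesis
    using assms GX_trunc_in_gens unfolding relator_def FA_def
    by (intro subgroup_free_Abelian_group_diff[OF carrier_subgroup]
        subgroup_free_Abelian_group_cmul[OF carrier_subgroup] sum_closed_free_Abelian_group)
      (auto simp: gens_def simp del: carrier_free_Abelian_group_iff)
qed

lemma rels_subset_carrier: "rels k \<Lambda> a \<subseteq> carrier (FA k \<Lambda>)"
  using relator_in_carrier by (auto simp: rels_def)

lemma subgroup_relsub: "subgroup (relsub k \<Lambda> a) (FA k \<Lambda>)"
  unfolding relsub_def
  by (rule group.generate_is_subgroup[OF _ rels_subset_carrier]) (simp add: FA_def)

abbreviation Gx_proj :: "nat \<Rightarrow> (nat \<Rightarrow> 's) list set \<Rightarrow> ((nat \<Rightarrow> 's) list \<Rightarrow> nat \<Rightarrow> int)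
    \<Rightarrow> ('s gen \<Rightarrow>\<^sub>0 int) \<Rightarrow> ('s gen \<Rightarrow>\<^sub>0 int) set" where
  "Gx_proj k \<Lambda> a f \<equiv> relsub k \<Lambda> a #>\<^bsub>FA k \<Lambda>\<^esub> f"

lemma group_hom_Gx_proj: "group_hom (FA k \<Lambda>) (Gx k \<Lambda> a) (Gx_proj k \<Lambda> a)"
proof -
  have "relsub k \<Lambda> a \<lhd> FA k \<Lambda>"
    using comm_group.subgroup_imp_normal[OF _ subgroup_relsub]
    by (simp add: FA_def abelian_free_Abelian_group)
  then show ?thesis
    unfolding Gx_def group_hom_def group_hom_axioms_def
    by (simp add: normal.r_coset_hom_Mod normal.factorgroup_is_group) (simp add: FA_def)
qed

lemma Gx_proj_surj: "Gx_proj k \<Lambda> a ` carrier (FA k \<Lambda>) = carrier (Gx k \<Lambda> a)"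
  by (auto simp: Gx_def carrier_FactGroup RCOSETS_def)

lemma kernel_Gx_proj: "kernel (FA k \<Lambda>) (Gx k \<Lambda> a) (Gx_proj k \<Lambda> a) = relsub k \<Lambda> a"
proof -
  have FA: "group (FA k \<Lambda>)"
    by (simp add: FA_def)
  have "f \<in> relsub k \<Lambda> a \<longleftrightarrow> Gx_proj k \<Lambda> a f = relsub k \<Lambda> a" if "f \<in> carrier (FA k \<Lambda>)" for f
    using subgroup.rcos_const[OF subgroup_relsub FA] group.rcos_self[OF FA that subgroup_relsub]
    by blast
  moreover have "\<one>\<^bsub>Gx k \<Lambda> a\<^esub> = relsub k \<Lambda> a"
    by (simp add: Gx_def FactGroup_def)
  ultimately show ?thesis
    using subgroup.mem_carrier[OF subgroup_relsub] unfolding kernel_def by blast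
qed

lemma frag_of_GY_eq_relator:
  "frag_of (GY \<eta>s n)
      = (frag_cmul (int (fact n)) (frag_of (GY \<eta>s (Suc n)))
         - (frag_cmul (a \<eta>s n) (frag_of GZ) + (\<Sum>m\<le>k. frag_of (GX (trunc \<eta>s m n)))))
        - relator k a \<eta>s n"
  unfolding relator_def by (simp add: algebra_simps)

lemma group_Gx: "group (Gx k \<Lambda> a)"
  by (rule group_hom.axioms(2)[OF group_hom_Gx_proj])

lemma cls_in_carrier: "g \<in> gens k \<Lambda> \<Longrightarrow> cls k \<Lambda> a g \<in> carrier (Gx k \<Lambda> a)"
  unfolding cls_def by (rule group_hom.hom_closed[OF group_hom_Gx_proj]) (simp add: FA_def)

section \<open>Saturated sets of generators\<close>

text \<open>The closure conditions do not involve \<open>a\<close>, so the locale predicate is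
  \<open>saturated_gens k \<Lambda> T\<close>; \<open>a\<close> is only a parameter of the constructions inside.\<close>

locale saturated_gens =
  fixes k :: nat and \<Lambda> :: "(nat \<Rightarrow> 's) list set" and a :: "(nat \<Rightarrow> 's) list \<Rightarrow> nat \<Rightarrow> int"
    and T :: "'s gen set"
  assumes subset_gens: "T \<subseteq> gens k \<Lambda>"
    and GY_closed: "GY \<eta>s n \<in> T \<Longrightarrow> GY \<eta>s n' \<in> T"
    and GZ_closed: "\<eta>s \<in> \<Lambda> \<Longrightarrow> GY \<eta>s n \<in> T \<Longrightarrow> GZ \<in> T"
    and GX_closed: "\<eta>s \<in> \<Lambda> \<Longrightarrow> GY \<eta>s n \<in> T \<Longrightarrow> m \<le> k \<Longrightarrow> GX (trunc \<eta>s m n) \<in> T"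
begin

abbreviation F :: "('s gen \<Rightarrow>\<^sub>0 int) monoid" where
  "F \<equiv> FA k \<Lambda>"

abbreviation M :: "('s gen \<Rightarrow>\<^sub>0 int) set" where
  "M \<equiv> generate F (relsub k \<Lambda> a \<union> frag_of ` T)"

lemma generators_subset_carrier: "relsub k \<Lambda> a \<union> frag_of ` T \<subseteq> carrier F"
  using subgroup.subset[OF subgroup_relsub] subset_gens by (auto simp: FA_def)

lemma subgroup_M: "subgroup M F"
  using group.generate_is_subgroup[OF _ generators_subset_carrier] by (simp add: FA_def)

lemma relator_in_M: "\<eta>s \<in> \<Lambda> \<Longrightarrow> relator k a \<eta>s n \<in> M"
  by (auto intro!: generate.incl simp: relsub_def rels_def)

lemma frag_of_in_M: "g \<in> T \<Longrightarrow> frag_of g \<in> M"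
  by (auto intro: generate.incl)

definition basis_val :: "'s gen \<Rightarrow> 's gen \<Rightarrow> rat" where
  "basis_val g w = of_bool (g \<notin> T \<and> w = g)"

primrec y_val :: "(nat \<Rightarrow> 's) list \<Rightarrow> nat \<Rightarrow> 's gen \<Rightarrow> rat" where
  "y_val \<eta>s 0 w = of_bool (w = GY \<eta>s 0)"
| "y_val \<eta>s (Suc n) w = (y_val \<eta>s n w + of_int (a \<eta>s n) * basis_val GZ w
      + (\<Sum>m\<le>k. basis_val (GX (trunc \<eta>s m n)) w)) / fact n"

definition gen_val :: "'s gen \<Rightarrow> 's gen \<Rightarrow> rat" where
  "gen_val g w = (case g of GY \<eta>s n \<Rightarrow> if g \<in> T then 0 else y_val \<eta>s n w | _ \<Rightarrow> basis_val g w)"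

definition coord :: "('s gen \<Rightarrow>\<^sub>0 int) \<Rightarrow> 's gen \<Rightarrow> rat" where
  "coord f w = frag_eval (\<lambda>g. gen_val g w) f"

lemma gen_val_simps [simp]:
  "gen_val GZ w = basis_val GZ w"
  "gen_val (GX \<nu>s) w = basis_val (GX \<nu>s) w"
  "gen_val (GY \<eta>s n) w = (if GY \<eta>s n \<in> T then 0 else y_val \<eta>s n w)"
  by (simp_all add: gen_val_def)

lemma gen_val_T: "g \<in> T \<Longrightarrow> gen_val g w = 0"
  by (cases g) (auto simp: basis_val_def)

lemma coord_relator:
  assumes "\<eta>s \<in> \<Lambda>"
  shows "coord (relator k a \<eta>s n) w = 0"
proof -
  have coord_eq: "coord (relator k a \<eta>s n) w = fact n * gen_val (GY \<eta>s (Suc n)) w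
      - gen_val (GY \<eta>s n) w - of_int (a \<eta>s n) * gen_val GZ w
      - (\<Sum>m\<le>k. gen_val (GX (trunc \<eta>s m n)) w)"
    by (simp add: coord_def relator_def frag_eval_diff frag_eval_cmul frag_eval_sum del: gen_val_simps)
  consider "GY \<eta>s n \<in> T" "GY \<eta>s (Suc n) \<in> T" | "GY \<eta>s n \<notin> T" "GY \<eta>s (Suc n) \<notin> T"
    using GY_closed by blast
  then show ?thesis
  proof cases
    case 1
    then show ?thesis
      using coord_eq GZ_closed[OF assms] GX_closed[OF assms] by (simp add: gen_val_T del: gen_val_simps)
  next
    case 2
    have "fact n * y_val \<eta>s (Suc n) w = y_val \<eta>s n w + of_int (a \<eta>s n) * basis_val GZ w
        + (\<Sum>m\<le>k. basis_val (GX (trunc \<eta>s m n)) w)"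
      by simp
    with 2 show ?thesis
      using coord_eq by (simp del: y_val.simps)
  qed
qed

lemma coord_M:
  assumes "f \<in> M"
  shows "coord f w = 0"
proof -
  have rels: "frag_eval (\<lambda>g. gen_val g w) r = 0" if "r \<in> rels k \<Lambda> a" for r
    using that coord_relator unfolding rels_def coord_def by auto
  have relsub: "frag_eval (\<lambda>g. gen_val g w) r = 0" if "r \<in> relsub k \<Lambda> a" for r
    using rels_subset_carrier[of k \<Lambda> a] rels that unfolding relsub_def FA_def
    by (rule frag_eval_generate_eq_0)
  have generators: "frag_eval (\<lambda>g. gen_val g w) r = 0" if "r \<in> relsub k \<Lambda> a \<union> frag_of ` T" for r
    using that relsub by (auto simp: gen_val_T simp del: gen_val_simps)
  show ?thesis
    using generators_subset_carrier generators assms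
    unfolding coord_def FA_def by (rule frag_eval_generate_eq_0)
qed

lemma M_zero: "0 \<in> M"
  using generate.one[of F] by (simp add: FA_def)

lemma M_diff: "f \<in> M \<Longrightarrow> g \<in> M \<Longrightarrow> f - g \<in> M"
  using subgroup_free_Abelian_group_diff subgroup_M unfolding FA_def by blast

definition level_gens :: "nat \<Rightarrow> 's gen set" where
  "level_gens N = {g \<in> gens k \<Lambda>. \<forall>\<eta>s n. g = GY \<eta>s n \<longrightarrow> n = N}"

definition reduces_to_level :: "nat \<Rightarrow> ('s gen \<Rightarrow>\<^sub>0 int) \<Rightarrow> bool" where
  "reduces_to_level N f \<longleftrightarrow> (\<exists>h. Poly_Mapping.keys h \<subseteq> level_gens N - T \<and> f - h \<in> M)"

lemma reduces_to_level_M: "f \<in> M \<Longrightarrow> reduces_to_level N f"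
  unfolding reduces_to_level_def by (rule exI[of _ 0]) simp

lemma reduces_to_level_diff:
  assumes "reduces_to_level N f" "reduces_to_level N g"
  shows "reduces_to_level N (f - g)"
proof -
  obtain h h' where h: "Poly_Mapping.keys h \<subseteq> level_gens N - T" "f - h \<in> M"
    and h': "Poly_Mapping.keys h' \<subseteq> level_gens N - T" "g - h' \<in> M"
    using assms unfolding reduces_to_level_def by blast
  have "(f - g) - (h - h') = (f - h) - (g - h')"
    by (simp add: algebra_simps)
  then have "(f - g) - (h - h') \<in> M"
    using M_diff[OF h(2) h'(2)] by metis
  moreover have "Poly_Mapping.keys (h - h') \<subseteq> level_gens N - T"
    using h(1) h'(1) keys_diff[of h h'] by blast
  ultimately show ?thesis
    unfolding reduces_to_level_def by blast
qed

lemma reduces_to_level_cmul: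
  assumes "reduces_to_level N f"
  shows "reduces_to_level N (frag_cmul c f)"
proof (rule frag_closure_minus_cmul[where P = "reduces_to_level N"])
  show "reduces_to_level N 0"
    using M_zero by (rule reduces_to_level_M)
  show "reduces_to_level N (x - y)" if "reduces_to_level N x" "reduces_to_level N y" for x y
    using that by (rule reduces_to_level_diff)
qed (rule assms)

lemma reduces_to_level_keys:
  assumes "Poly_Mapping.keys f \<subseteq> level_gens N"
  shows "reduces_to_level N f"
  using assms
proof (induction f rule: frag_induction)
  case zero
  show ?case
    using M_zero by (rule reduces_to_level_M)
next
  case (one g)
  show ?case
  proof (cases "g \<in> T")
    case True
    then show ?thesis
      using frag_of_in_M reduces_to_level_M by blast
  next
    case False
    with one have "Poly_Mapping.keys (frag_of g) \<subseteq> level_gens N - T"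
      by (simp add: keys_frag_of)
    then show ?thesis
      unfolding reduces_to_level_def by (intro exI[of _ "frag_of g"]) (simp add: M_zero)
  qed
next
  case (diff f g)
  then show ?case
    by (rule reduces_to_level_diff)
qed

lemma reduces_to_level_GY:
  assumes "\<eta>s \<in> \<Lambda>" "n \<le> N"
  shows "reduces_to_level N (frag_of (GY \<eta>s n))"
  using assms(2)
proof (induction n rule: inc_induct)
  case base
  show ?case
    using assms(1) by (intro reduces_to_level_keys) (auto simp: keys_frag_of level_gens_def gens_def)
next
  case (step n)
  let ?lower = "frag_cmul (a \<eta>s n) (frag_of GZ) + (\<Sum>m\<le>k. frag_of (GX (trunc \<eta>s m n)))"
  have eq: "frag_of (GY \<eta>s n)
      = (frag_cmul (int (fact n)) (frag_of (GY \<eta>s (Suc n))) - ?lower) - relator k a \<eta>s n"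
    by (rule frag_of_GY_eq_relator)
  have "GZ \<in> level_gens N"
    by (simp add: level_gens_def gens_def)
  then have "Poly_Mapping.keys (frag_cmul (a \<eta>s n) (frag_of GZ)) \<subseteq> level_gens N"
    using keys_cmul[of "a \<eta>s n" "frag_of GZ"] by (auto simp: keys_frag_of)
  moreover have "Poly_Mapping.keys (\<Sum>m\<le>k. frag_of (GX (trunc \<eta>s m n))) \<subseteq> level_gens N"
    using assms(1) by (intro order.trans[OF keys_sum]) (auto simp: keys_frag_of level_gens_def GX_trunc_in_gens)
  ultimately have "Poly_Mapping.keys ?lower \<subseteq> level_gens N"
    by (intro order.trans[OF keys_add] Un_least)
  then have "reduces_to_level N ?lower"
    by (rule reduces_to_level_keys)
  moreover have "reduces_to_level N (frag_cmul (int (fact n)) (frag_of (GY \<eta>s (Suc n))))"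
    using step.IH by (rule reduces_to_level_cmul)
  ultimately have "reduces_to_level N (frag_cmul (int (fact n)) (frag_of (GY \<eta>s (Suc n))) - ?lower)"
    by (intro reduces_to_level_diff)
  moreover have "reduces_to_level N (relator k a \<eta>s n)"
    using relator_in_M[OF assms(1)] by (rule reduces_to_level_M)
  ultimately show ?case
    by (subst eq) (rule reduces_to_level_diff)
qed

lemma eventually_reduces_to_level:
  assumes "Poly_Mapping.keys f \<subseteq> gens k \<Lambda>"
  shows "\<forall>\<^sub>F N in sequentially. reduces_to_level N f"
  using assms
proof (induction f rule: frag_induction)
  case zero
  show ?case
    using M_zero reduces_to_level_M by simp
next
  case (one g)
  show ?case
  proof (cases "\<exists>\<eta>s n. g = GY \<eta>s n")
    case True
    then obtain \<eta>s n where g: "g = GY \<eta>s n"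
      by blast
    with one have "\<eta>s \<in> \<Lambda>"
      by (auto simp: gens_def)
    have "\<forall>\<^sub>F N in sequentially. n \<le> N"
      by (rule eventually_ge_at_top)
    then show ?thesis
      by (rule eventually_mono) (simp add: g reduces_to_level_GY \<open>\<eta>s \<in> \<Lambda>\<close>)
  next
    case False
    then have "reduces_to_level N (frag_of g)" for N
      using one by (intro reduces_to_level_keys) (auto simp: keys_frag_of level_gens_def)
    then show ?thesis
      by simp
  qed
next
  case (diff f g)
  then show ?case
    by (auto elim: eventually_elim2 intro: reduces_to_level_diff)
qed

lemma basis_val_GY [simp]: "basis_val GZ (GY \<eta>s n) = 0" "basis_val (GX \<nu>s) (GY \<eta>s n) = 0"
  by (simp_all add: basis_val_def)

lemma y_val_GY0: "y_val \<eta>s N (GY \<eta>s' 0) = (if \<eta>s' = \<eta>s then 1 / (\<Prod>n<N. fact n) else 0)"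
  by (induction N) simp_all

lemma gen_val_level_GY0:
  assumes "g \<in> level_gens N - T"
  shows "gen_val g (GY \<eta>s 0) = (if g = GY \<eta>s N then 1 / (\<Prod>n<N. fact n) else 0)"
proof (cases g)
  case (GY \<eta>s' n)
  with assms have "n = N" "g \<notin> T"
    by (auto simp: level_gens_def)
  with GY show ?thesis
    by (auto simp: y_val_GY0)
qed simp_all

lemma coord_level_GY0:
  assumes "Poly_Mapping.keys h \<subseteq> level_gens N - T"
  shows "coord h (GY \<eta>s 0) = of_int (poly_mapping.lookup h (GY \<eta>s N)) / (\<Prod>n<N. fact n)"
proof -
  have "coord h (GY \<eta>s 0) = (\<Sum>g\<in>Poly_Mapping.keys h.
      if g = GY \<eta>s N then of_int (poly_mapping.lookup h g) / (\<Prod>n<N. fact n) else 0)"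
    unfolding coord_def frag_eval_def
  proof (intro sum.cong refl)
    fix g
    assume "g \<in> Poly_Mapping.keys h"
    then have "gen_val g (GY \<eta>s 0) = (if g = GY \<eta>s N then 1 / (\<Prod>n<N. fact n) else 0)"
      using assms by (intro gen_val_level_GY0) blast
    then show "of_int (poly_mapping.lookup h g) * gen_val g (GY \<eta>s 0)
        = (if g = GY \<eta>s N then of_int (poly_mapping.lookup h g) / (\<Prod>n<N. fact n) else 0)"
      by simp
  qed
  also have "\<dots> = of_int (poly_mapping.lookup h (GY \<eta>s N)) / (\<Prod>n<N. fact n)"
    by (simp add: in_keys_iff)
  finally show ?thesis .
qed

lemma coord_no_GY:
  assumes "Poly_Mapping.keys h \<subseteq> gens k \<Lambda> - T" and "\<And>\<eta>s n. GY \<eta>s n \<notin> Poly_Mapping.keys h"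
  shows "coord h w = of_int (poly_mapping.lookup h w)"
proof -
  have "coord h w = (\<Sum>g\<in>Poly_Mapping.keys h. if g = w then of_int (poly_mapping.lookup h g) else 0)"
    unfolding coord_def frag_eval_def
  proof (intro sum.cong refl)
    fix g
    assume "g \<in> Poly_Mapping.keys h"
    then show "of_int (poly_mapping.lookup h g) * gen_val g w
        = (if g = w then of_int (poly_mapping.lookup h g) else 0)"
      using assms by (cases g) (auto simp: basis_val_def)
  qed
  also have "\<dots> = of_int (poly_mapping.lookup h w)"
    by (simp add: in_keys_iff)
  finally show ?thesis .
qed

lemma level_eq_0_if_coord_eq_0:
  assumes keys: "Poly_Mapping.keys h \<subseteq> level_gens N - T" and coord: "\<And>w. coord h w = 0"
  shows "h = 0"
proof -
  have "poly_mapping.lookup h (GY \<eta>s N) = 0" for \<eta>s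
    using coord_level_GY0[OF keys, of \<eta>s] coord[of "GY \<eta>s 0"] by simp
  then have no_GY: "GY \<eta>s n \<notin> Poly_Mapping.keys h" for \<eta>s n
    using keys by (auto simp: level_gens_def in_keys_iff)
  moreover have "Poly_Mapping.keys h \<subseteq> gens k \<Lambda> - T"
    using keys by (auto simp: level_gens_def)
  ultimately have "poly_mapping.lookup h w = 0" for w
    using coord_no_GY coord[of w] by simp
  then show ?thesis
    by (simp add: poly_mapping_eqI)
qed

lemma M_iff_coord_eq_0:
  assumes "Poly_Mapping.keys f \<subseteq> gens k \<Lambda>"
  shows "f \<in> M \<longleftrightarrow> (\<forall>w. coord f w = 0)"
proof
  assume coord_f: "\<forall>w. coord f w = 0"
  obtain N where "reduces_to_level N f"
    using eventually_reduces_to_level[OF assms] by (auto simp: eventually_sequentially)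
  then obtain h where h: "Poly_Mapping.keys h \<subseteq> level_gens N - T" "f - h \<in> M"
    unfolding reduces_to_level_def by blast
  have "coord h w = coord f w - coord (f - h) w" for w
    by (simp add: coord_def frag_eval_diff)
  then have "h = 0"
    using coord_f coord_M[OF h(2)] by (intro level_eq_0_if_coord_eq_0[OF h(1)]) simp
  with h show "f \<in> M"
    by simp
qed (use coord_M in blast)

lemma pure_subgroup_M: "pure_subgroup M (carrier F) F"
  unfolding pure_subgroup_def
proof (intro conjI ballI allI impI subgroup_M group.subgroup_self subgroup.subset)
  fix f and n :: int
  assume f: "f \<in> carrier F" and n: "n \<noteq> 0" and pow: "f [^]\<^bsub>F\<^esub> n \<in> M"
  have keys: "Poly_Mapping.keys f \<subseteq> gens k \<Lambda>"
    using f by (simp add: FA_def)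
  then have "frag_cmul n f \<in> M"
    using pow by (simp add: FA_def)
  then have "coord (frag_cmul n f) w = 0" for w
    by (rule coord_M)
  then have "of_int n * coord f w = 0" for w
    by (simp add: coord_def frag_eval_cmul)
  then show "f \<in> M"
    using n M_iff_coord_eq_0[OF keys] by simp
qed (simp add: FA_def)

lemma M_eq_vimage:
  "M = {f \<in> carrier F. Gx_proj k \<Lambda> a f \<in> generate (Gx k \<Lambda> a) (cls k \<Lambda> a ` T)}"
proof -
  have "{f \<in> carrier F. Gx_proj k \<Lambda> a f \<in> generate (Gx k \<Lambda> a) (Gx_proj k \<Lambda> a ` frag_of ` T)}
      = generate F (kernel F (Gx k \<Lambda> a) (Gx_proj k \<Lambda> a) \<union> frag_of ` T)"
    using subset_gens by (intro group_hom.vimage_generate_image[OF group_hom_Gx_proj]) (auto simp: FA_def)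
  moreover have "Gx_proj k \<Lambda> a ` frag_of ` T = cls k \<Lambda> a ` T"
    by (auto simp: cls_def)
  ultimately show ?thesis
    by (simp add: kernel_Gx_proj)
qed

theorem pure_subgroup_generate_cls:
  "pure_subgroup (generate (Gx k \<Lambda> a) (cls k \<Lambda> a ` T)) (carrier (Gx k \<Lambda> a)) (Gx k \<Lambda> a)"
proof -
  have "cls k \<Lambda> a ` T \<subseteq> carrier (Gx k \<Lambda> a)"
    using subset_gens cls_in_carrier by blast
  then have "subgroup (generate (Gx k \<Lambda> a) (cls k \<Lambda> a ` T)) (Gx k \<Lambda> a)"
    by (rule group.generate_is_subgroup[OF group_Gx])
  moreover have "pure_subgroup {f \<in> carrier F. Gx_proj k \<Lambda> a f \<in> generate (Gx k \<Lambda> a) (cls k \<Lambda> a ` T)}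
      (carrier F) F"
    by (subst M_eq_vimage[symmetric]) (rule pure_subgroup_M)
  ultimately show ?thesis
    by (rule group_hom.pure_subgroup_of_pure_vimage[OF group_hom_Gx_proj Gx_proj_surj])
qed

end

section \<open>The subgroups G_U and G_(U,u)\<close>

definition GU_gens :: "nat \<Rightarrow> (nat \<Rightarrow> 's) list set \<Rightarrow> (nat \<Rightarrow> 's) set \<Rightarrow> 's gen set" where
  "GU_gens k \<Lambda> U = {GZ} \<union> {GY \<eta>s n | \<eta>s n. \<eta>s \<in> \<Lambda> \<and> set \<eta>s \<subseteq> U}
     \<union> {GX (trunc \<eta>s m n) | \<eta>s m n. \<eta>s \<in> \<Lambda> \<and> set \<eta>s \<subseteq> U \<and> m \<le> k}"

lemma GU_eq_generate: "GU k \<Lambda> a U = generate (Gx k \<Lambda> a) (cls k \<Lambda> a ` GU_gens k \<Lambda> U)"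
  by (simp add: GU_def GU_gens_def)

lemma GU_gens_mono: "U \<subseteq> V \<Longrightarrow> GU_gens k \<Lambda> U \<subseteq> GU_gens k \<Lambda> V"
  unfolding GU_gens_def by blast

lemma saturated_GU_gens: "saturated_gens k \<Lambda> (GU_gens k \<Lambda> U)"
  by unfold_locales (auto simp: GU_gens_def GX_trunc_in_gens, auto simp: gens_def)

lemma saturated_gens_UN:
  assumes sat: "\<And>i. i \<in> I \<Longrightarrow> saturated_gens k \<Lambda> (A i)"
  shows "saturated_gens k \<Lambda> (\<Union>i\<in>I. A i)"
proof
  show "(\<Union>i\<in>I. A i) \<subseteq> gens k \<Lambda>"
    using saturated_gens.subset_gens[OF sat] by blast
  fix \<eta>s n
  assume "GY \<eta>s n \<in> (\<Union>i\<in>I. A i)"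
  then obtain i where i: "i \<in> I" "GY \<eta>s n \<in> A i"
    by blast
  show "GY \<eta>s n' \<in> (\<Union>i\<in>I. A i)" for n'
    using saturated_gens.GY_closed[OF sat[OF i(1)] i(2)] i(1) by blast
  show "GZ \<in> (\<Union>i\<in>I. A i)" if "\<eta>s \<in> \<Lambda>"
    using saturated_gens.GZ_closed[OF sat[OF i(1)] that i(2)] i(1) by blast
  show "GX (trunc \<eta>s m n) \<in> (\<Union>i\<in>I. A i)" if "\<eta>s \<in> \<Lambda>" "m \<le> k" for m
    using saturated_gens.GX_closed[OF sat[OF i(1)] that(1) i(2) that(2)] i(1) by blast
qed

lemma GUu_eq_generate:
  "GUu k \<Lambda> a U u = generate (Gx k \<Lambda> a) (cls k \<Lambda> a ` (\<Union>v\<in>u. GU_gens k \<Lambda> (U \<union> (u - {v}))))"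
proof -
  have "cls k \<Lambda> a ` GU_gens k \<Lambda> (U \<union> (u - {v})) \<subseteq> carrier (Gx k \<Lambda> a)" for v
    using saturated_gens.subset_gens[OF saturated_GU_gens] cls_in_carrier by blast
  then show ?thesis
    unfolding GUu_def GU_eq_generate image_UN by (rule group.generate_UN_generate[OF group_Gx])
qed

theorem claim1p10:
  fixes k :: nat and S :: "'s set" and \<Lambda> :: "(nat \<Rightarrow> 's) list set"
    and a :: "(nat \<Rightarrow> 's) list \<Rightarrow> nat \<Rightarrow> int"
    and U u :: "(nat \<Rightarrow> 's) set"
  assumes "is_param k S \<Lambda> a"
    and "U \<subseteq> omega_seqs S"
    and "u \<subseteq> omega_seqs S - U" and "finite u"
  shows "GUu k \<Lambda> a U u \<subseteq> GU k \<Lambda> a (U \<union> u)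
    \<and> pure_subgroup (GUu k \<Lambda> a U u) (GU k \<Lambda> a (U \<union> u)) (Gx k \<Lambda> a)
    \<and> pure_subgroup (GU k \<Lambda> a (U \<union> u)) (carrier (Gx k \<Lambda> a)) (Gx k \<Lambda> a)"
proof -
  define T where "T = (\<Union>v\<in>u. GU_gens k \<Lambda> (U \<union> (u - {v})))"
  have GUu_eq: "GUu k \<Lambda> a U u = generate (Gx k \<Lambda> a) (cls k \<Lambda> a ` T)"
    unfolding T_def by (rule GUu_eq_generate)
  have "T \<subseteq> GU_gens k \<Lambda> (U \<union> u)"
    unfolding T_def by (intro UN_least GU_gens_mono) blast
  then have sub: "GUu k \<Lambda> a U u \<subseteq> GU k \<Lambda> a (U \<union> u)"
    unfolding GUu_eq GU_eq_generate by (intro group.mono_generate[OF group_Gx] image_mono)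
  have pure_GU: "pure_subgroup (GU k \<Lambda> a (U \<union> u)) (carrier (Gx k \<Lambda> a)) (Gx k \<Lambda> a)"
    unfolding GU_eq_generate by (rule saturated_gens.pure_subgroup_generate_cls[OF saturated_GU_gens])
  have "saturated_gens k \<Lambda> T"
    unfolding T_def by (intro saturated_gens_UN saturated_GU_gens)
  then have "pure_subgroup (GUu k \<Lambda> a U u) (carrier (Gx k \<Lambda> a)) (Gx k \<Lambda> a)"
    unfolding GUu_eq by (rule saturated_gens.pure_subgroup_generate_cls)
  moreover have "subgroup (GU k \<Lambda> a (U \<union> u)) (Gx k \<Lambda> a)"
    using pure_GU by (simp add: pure_subgroup_def)
  ultimately have "pure_subgroup (GUu k \<Lambda> a U u) (GU k \<Lambda> a (U \<union> u)) (Gx k \<Lambda> a)"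
    using sub by (rule pure_subgroup_intermediate)
  with sub pure_GU show ?thesis
    by blast
qed

end
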